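(* Let $(\psi,p,A)$ be a regular normal extremal containing an interior three-bang block $Y(\ell_1)\,X(\tau_X)\,Y(\ell_2)$, i.e. three consecutive arcs, a $Y$-arc of length $\ell_1\in(0,2\pi)$, an $X$-arc of length $\tau_X=\pi/\sin\gamma$, and a $Y$-arc of length $\ell_2\in(0,2\pi)$, whose initial and final times are both switching times. If the reduced data at the initial time of the block are $(0,a,b)$ with $a\neq0$, then the reduced data at its final time are $(0,-a,b)$, i.e. the same as those produced by a single switching-to-switching $X$-arc of length $\tau_X$ started from $(0,a,b)$, while the block has total length $\ell_1+\tau_X+\ell_2>\tau_X$. Consequently, such an interior $YXY$ block cannot occur on a regular normal time-optimal extremal.
   Context: Fix $\gamma\in(0,\pi/2)$, $s=\sin\gamma$, $c=\cos\gamma$, and $X=\begin{pmatrix}0&s^2&sc\\-s^2&0&0\\-sc&0&0\end{pmatrix}$, $Y=\begin{pmatrix}0&1&0\\-1&0&0\\0&0&0\end{pmatrix}$ on $\mathbb R^3$ with standard basis $e_1,e_2,e_3$ and standard inner product. Let $\Sigma=\{\psi:\langle e_3,\psi\rangle=0\}$, $\psi_0=(0,s,c)^\top$. Time-optimal problem: over piecewise constant controls $A:[0,T]\to\{X,Y\}$ with finitely many discontinuities (switching times) and trajectories $\dot\psi=A(t)\psi$, $\psi(0)=\psi_0$, minimize $T$ subject to $\psi(T)\in\Sigma$. Maximal intervals on which $A\equiv X$ (resp. $Y$) are $X$-arcs (resp. $Y$-arcs), also called bangs. A normal extremal is such a trajectory with a nonzero absolutely continuous costate $p$ satisfying $\dot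 p=-A(t)^\top p$ and, for a.e. $t$, $\langle p,A(t)\psi\rangle-1=\max_{B\in\{X,Y\}}(\langle p,B\psi\rangle-1)$. Let $F_1=X-Y$, $F_2=[X,Y]$, $F_3=[Y,[X,Y]]$, and reduced data $(\phi_1,\phi_2,\phi_3)$ with $\phi_i=\langle p,F_i\psi\rangle$; the switching function is $\Phi=\phi_1$. A normal extremal is regular (bang–bang) if $\Phi$ vanishes only at isolated times and at every switching time $\phi_1=0$ and $\phi_2\neq 0$. Time-optimal means the trajectory solves the minimization problem. *)

theory Defs
  imports "HOL-Analysis.Analysis"
begin

definition Xm :: "real \<Rightarrow> real^3^3" where
  "Xm \<gamma> = vector [vector [0, (sin \<gamma>)^2, sin \<gamma> * cos \<gamma>],
                   vector [-((sin \<gamma>)^2), 0, 0],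
                   vector [-(sin \<gamma> * cos \<gamma>), 0, 0]]"

definition Ym :: "real^3^3" where
  "Ym = vector [vector [0, 1, 0], vector [-1, 0, 0], vector [0, 0, 0]]"

definition lie :: "real^3^3 \<Rightarrow> real^3^3 \<Rightarrow> real^3^3" where
  "lie M N = M ** N - N ** M"

definition F1 :: "real \<Rightarrow> real^3^3" where "F1 \<gamma> = Xm \<gamma> - Ym"
definition F2 :: "real \<Rightarrow> real^3^3" where "F2 \<gamma> = lie (Xm \<gamma>) Ym"
definition F3 :: "real \<Rightarrow> real^3^3" where "F3 \<gamma> = lie Ym (lie (Xm \<gamma>) Ym)"

definition e3 :: "real^3" where "e3 = vector [0, 0, 1]"

definition psi0 :: "real \<Rightarrow> real^3" where
  "psi0 \<gamma> = vector [0, sin \<gamma>, cos \<gamma>]"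

definition SigmaT :: "(real^3) set" where "SigmaT = {\<psi>. e3 \<bullet> \<psi> = 0}"

text \<open>Reduced data phi_i = <p, F_i psi>; the switching function is phi_1.\<close>
definition phi :: "real \<Rightarrow> (real \<Rightarrow> real^3) \<Rightarrow> (real \<Rightarrow> real^3) \<Rightarrow> real \<Rightarrow> real \<times> real \<times> real" where
  "phi \<gamma> \<psi> p t = (p t \<bullet> (F1 \<gamma> *v \<psi> t), p t \<bullet> (F2 \<gamma> *v \<psi> t), p t \<bullet> (F3 \<gamma> *v \<psi> t))"

text \<open>Admissible controls: values in {X,Y} on [0,T], piecewise constant with finitely
 many discontinuities (a function with values in a two-point set is continuous at t
 iff it is locally constant at t).\<close>
definition admissible_control :: "real \<Rightarrow> real \<Rightarrow> (real \<Rightarrow> real^3^3) \<Rightarrow> bool" where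
  "admissible_control \<gamma> T A \<longleftrightarrow> 0 \<le> T \<and> (\<forall>t\<in>{0..T}. A t \<in> {Xm \<gamma>, Ym}) \<and>
     (\<exists>S. finite S \<and> (\<forall>t\<in>{0..T} - S. continuous (at t within {0..T}) A))"

definition trajectory :: "real \<Rightarrow> real \<Rightarrow> (real \<Rightarrow> real^3^3) \<Rightarrow> (real \<Rightarrow> real^3) \<Rightarrow> bool" where
  "trajectory \<gamma> T A \<psi> \<longleftrightarrow> admissible_control \<gamma> T A \<and> \<psi> 0 = psi0 \<gamma> \<and>
     continuous_on {0..T} \<psi> \<and>
     (\<exists>S. finite S \<and> (\<forall>t\<in>{0..T} - S.
        (\<psi> has_vector_derivative (A t *v \<psi> t)) (at t within {0..T})))"

definition time_optimal :: "real \<Rightarrow> real \<Rightarrow> (real \<Rightarrow> real^3^3) \<Rightarrow> (real \<Rightarrow> real^3) \<Rightarrow> bool" where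
  "time_optimal \<gamma> T A \<psi> \<longleftrightarrow> trajectory \<gamma> T A \<psi> \<and> \<psi> T \<in> SigmaT \<and>
     (\<forall>T' A' \<psi>'. trajectory \<gamma> T' A' \<psi>' \<and> \<psi>' T' \<in> SigmaT \<longrightarrow> T \<le> T')"

text \<open>Since A is piecewise constant,
 absolute continuity of p together with the a.e. adjoint equation amounts to p being
 continuous and satisfying the adjoint equation outside a finite set.\<close>
definition normal_extremal :: "real \<Rightarrow> real \<Rightarrow> (real \<Rightarrow> real^3^3) \<Rightarrow> (real \<Rightarrow> real^3) \<Rightarrow> (real \<Rightarrow> real^3) \<Rightarrow> bool" where
  "normal_extremal \<gamma> T A \<psi> p \<longleftrightarrow> trajectory \<gamma> T A \<psi> \<and>
     (\<exists>t\<in>{0..T}. p t \<noteq> 0) \<and>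
     continuous_on {0..T} p \<and>
     (\<exists>S. finite S \<and> (\<forall>t\<in>{0..T} - S.
        (p has_vector_derivative (- (transpose (A t) *v p t))) (at t within {0..T}))) \<and>
     (AE t in lebesgue. t \<in> {0..T} \<longrightarrow>
        p t \<bullet> (A t *v \<psi> t) - 1 =
          max (p t \<bullet> (Xm \<gamma> *v \<psi> t) - 1) (p t \<bullet> (Ym *v \<psi> t) - 1))"

definition switching_time :: "real \<Rightarrow> (real \<Rightarrow> real^3^3) \<Rightarrow> real \<Rightarrow> bool" where
  "switching_time T A t \<longleftrightarrow> 0 < t \<and> t < T \<and>
     (\<forall>e>0. \<exists>s1 s2. t - e < s1 \<and> s1 < t \<and> t < s2 \<and> s2 < t + e \<and> A s1 \<noteq> A s2)"

definition regular_normal_extremal :: "real \<Rightarrow> real \<Rightarrow> (real \<Rightarrow> real^3^3) \<Rightarrow> (real \<Rightarrow> real^3) \<Rightarrow> (real \<Rightarrow> real^3) \<Rightarrow> bool" where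
  "regular_normal_extremal \<gamma> T A \<psi> p \<longleftrightarrow> normal_extremal \<gamma> T A \<psi> p \<and>
     (\<forall>t\<in>{0..T}. fst (phi \<gamma> \<psi> p t) = 0 \<longrightarrow>
        (\<exists>e>0. \<forall>s\<in>{0..T}. 0 < \<bar>s - t\<bar> \<and> \<bar>s - t\<bar> < e \<longrightarrow> fst (phi \<gamma> \<psi> p s) \<noteq> 0)) \<and>
     (\<forall>t. switching_time T A t \<longrightarrow>
        fst (phi \<gamma> \<psi> p t) = 0 \<and> fst (snd (phi \<gamma> \<psi> p t)) \<noteq> 0)"

definition YXY_block :: "real \<Rightarrow> real \<Rightarrow> (real \<Rightarrow> real^3^3) \<Rightarrow> real \<Rightarrow> real \<Rightarrow> real \<Rightarrow> real \<Rightarrow> bool" where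
  "YXY_block \<gamma> T A t0 l1 \<tau> l2 \<longleftrightarrow>
     (\<forall>t\<in>{t0<..<t0+l1}. A t = Ym) \<and>
     (\<forall>t\<in>{t0+l1<..<t0+l1+\<tau>}. A t = Xm \<gamma>) \<and>
     (\<forall>t\<in>{t0+l1+\<tau><..<t0+l1+\<tau>+l2}. A t = Ym) \<and>
     switching_time T A t0 \<and> switching_time T A (t0+l1+\<tau>+l2)"

end

theory Submission
  imports Defs
begin

text \<open>Along an arc of constant control M the reduced data obey the linear equations
 d/dt <p, F psi> = <p, [F, M] psi>, closed up by the bracket relations [F1,Y] = F2, [F2,Y] = -F3,
 [F3,Y] = F2 and [F1,X] = F2, [F2,X] = -(sin g)^2 F1, [F3,X] = (sin g)^2 F2.
 On a Y-arc phi1 - phi3 is conserved and (phi2, phi3) rotates by the arc length; as phi1 vanishes at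
 both (switching) ends, phi3 returns to its value, which for a length in (0, 2 pi) forces phi2 to change
 sign. On an X-arc phi1 is a harmonic oscillator of frequency sin g, so after time pi / sin g both phi1
 and phi2 change sign while phi3 - (sin g)^2 phi1 is conserved. Hence the block maps (0,a,b) to
 (0,-a,b), (0,a,b), (0,-a,b) in turn.
 The extremal is not optimal because the constant control X already steers psi0 to the target in time
 pi / (2 sin g), shorter than the X-arc of the block alone.\<close>

lemma matrix_vector_mult_uminus_left: "(- M) *v x = - (M *v (x :: real^'n))"
  using scaleR_matrix_vector_assoc[of "-1" M x] by simp

lemma costate_pairing_has_derivative:
  fixes \<psi> p :: "real \<Rightarrow> real^'n" and M F :: "real^'n^'n"
  assumes "(\<psi> has_vector_derivative (M *v \<psi> t)) (at t within D)"
    and "(p has_vector_derivative (- (transpose M *v p t))) (at t within D)"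
  shows "((\<lambda>t. p t \<bullet> (F *v \<psi> t)) has_real_derivative p t \<bullet> ((F ** M - M ** F) *v \<psi> t)) (at t within D)"
proof -
  have "((\<lambda>t. F *v \<psi> t) has_vector_derivative F *v (M *v \<psi> t)) (at t within D)"
    using bounded_linear.has_vector_derivative[OF matrix_vector_mul_bounded_linear assms(1)] .
  from bounded_bilinear.has_vector_derivative[OF bounded_bilinear_inner assms(2) this]
  have "((\<lambda>t. p t \<bullet> (F *v \<psi> t)) has_real_derivative
      p t \<bullet> (F *v (M *v \<psi> t)) - (p t v* M) \<bullet> (F *v \<psi> t)) (at t within D)"
    by (simp add: has_real_derivative_iff_has_vector_derivative)
  moreover have "(p t v* M) \<bullet> (F *v \<psi> t) = p t \<bullet> (M *v (F *v \<psi> t))"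
    by (rule dot_lmul_matrix)
  ultimately show ?thesis
    by (simp add: matrix_vector_mul_assoc matrix_vector_mult_diff_rdistrib inner_diff_right)
qed

lemma has_real_derivative_zero_Icc_eq:
  fixes f :: "real \<Rightarrow> real"
  assumes "finite K" "continuous_on {u..v} f" "u \<le> v"
    and "\<And>t. t \<in> {u..v} - K \<Longrightarrow> (f has_real_derivative 0) (at t within {u..v})"
  shows "f v = f u"
proof (rule has_derivative_zero_unique_strong_interval[OF assms(1,2) refl])
  show "v \<in> {u..v}" using assms(3) by simp
  have "(*) 0 = (\<lambda>h::real. 0)" by auto
  then show "(f has_derivative (\<lambda>h. 0)) (at t within {u..v})" if "t \<in> {u..v} - K" for t
    using assms(4)[OF that] by (simp add: has_field_derivative_def)
qed

lemma rotation_system_solution: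
  fixes g1 g2 g3 :: "real \<Rightarrow> real"
  assumes "u \<le> v" "finite K"
    and "continuous_on {u..v} g1" "continuous_on {u..v} g2" "continuous_on {u..v} g3"
    and "\<And>t. t \<in> {u..v} - K \<Longrightarrow> (g1 has_real_derivative g2 t) (at t within {u..v}) \<and>
        (g2 has_real_derivative - g3 t) (at t within {u..v}) \<and>
        (g3 has_real_derivative g2 t) (at t within {u..v})"
  shows "g1 v - g3 v = g1 u - g3 u"
    and "g2 v = g2 u * cos (v - u) - g3 u * sin (v - u)"
    and "g3 v = g2 u * sin (v - u) + g3 u * cos (v - u)"
proof -
  note const = has_real_derivative_zero_Icc_eq[OF \<open>finite K\<close> _ \<open>u \<le> v\<close>]
  have w1: "g1 v - g3 v = g1 u - g3 u"
    by (rule const[where f = "\<lambda>t. g1 t - g3 t"])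
      (use assms in \<open>auto intro!: continuous_intros derivative_eq_intros\<close>)
  have "g2 v * cos (v - u) + g3 v * sin (v - u) = g2 u * cos (u - u) + g3 u * sin (u - u)"
    by (rule const[where f = "\<lambda>t. g2 t * cos (t - u) + g3 t * sin (t - u)"])
      (use assms in \<open>auto intro!: continuous_intros derivative_eq_intros simp: algebra_simps\<close>)
  moreover have "- g2 v * sin (v - u) + g3 v * cos (v - u) = - g2 u * sin (u - u) + g3 u * cos (u - u)"
    by (rule const[where f = "\<lambda>t. - g2 t * sin (t - u) + g3 t * cos (t - u)"])
      (use assms in \<open>auto intro!: continuous_intros derivative_eq_intros simp: algebra_simps\<close>)
  ultimately have w2: "g2 u = g2 v * cos (v - u) + g3 v * sin (v - u)"
    and w3: "g3 u = - g2 v * sin (v - u) + g3 v * cos (v - u)"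
    by simp_all
  have "g2 u * cos (v - u) - g3 u * sin (v - u) =
      g2 v * (cos (v - u) * cos (v - u) + sin (v - u) * sin (v - u))"
    and "g2 u * sin (v - u) + g3 u * cos (v - u) =
      g3 v * (cos (v - u) * cos (v - u) + sin (v - u) * sin (v - u))"
    unfolding w2 w3 by (simp_all add: algebra_simps del: sin_cos_squared_add3)
  with w1 show "g1 v - g3 v = g1 u - g3 u"
    and "g2 v = g2 u * cos (v - u) - g3 u * sin (v - u)"
    and "g3 v = g2 u * sin (v - u) + g3 u * cos (v - u)"
    by simp_all
qed

lemma harmonic_half_period:
  fixes g1 g2 g3 :: "real \<Rightarrow> real"
  assumes "0 < k" "v = u + pi / k" "finite K"
    and "continuous_on {u..v} g1" "continuous_on {u..v} g2" "continuous_on {u..v} g3"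
    and "\<And>t. t \<in> {u..v} - K \<Longrightarrow> (g1 has_real_derivative g2 t) (at t within {u..v}) \<and>
        (g2 has_real_derivative - (k^2 * g1 t)) (at t within {u..v}) \<and>
        (g3 has_real_derivative k^2 * g2 t) (at t within {u..v})"
  shows "g1 v = - g1 u" and "g2 v = - g2 u" and "g3 v - k^2 * g1 v = g3 u - k^2 * g1 u"
proof -
  have "u \<le> v" using assms(1,2) by simp
  have kv: "k * (v - u) = pi" using assms(1,2) by simp
  note const = has_real_derivative_zero_Icc_eq[OF \<open>finite K\<close> _ \<open>u \<le> v\<close>]
  have w1: "g3 v - k^2 * g1 v = g3 u - k^2 * g1 u"
    by (rule const[where f = "\<lambda>t. g3 t - k^2 * g1 t"])
      (use assms in \<open>auto intro!: continuous_intros derivative_eq_intros\<close>)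
  have "k * g1 v * cos (k * (v - u)) - g2 v * sin (k * (v - u)) =
      k * g1 u * cos (k * (u - u)) - g2 u * sin (k * (u - u))"
    by (rule const[where f = "\<lambda>t. k * g1 t * cos (k * (t - u)) - g2 t * sin (k * (t - u))"])
      (use assms in \<open>auto intro!: continuous_intros derivative_eq_intros
        simp: algebra_simps power2_eq_square\<close>)
  moreover have "k * g1 v * sin (k * (v - u)) + g2 v * cos (k * (v - u)) =
      k * g1 u * sin (k * (u - u)) + g2 u * cos (k * (u - u))"
    by (rule const[where f = "\<lambda>t. k * g1 t * sin (k * (t - u)) + g2 t * cos (k * (t - u))"])
      (use assms in \<open>auto intro!: continuous_intros derivative_eq_intros
        simp: algebra_simps power2_eq_square\<close>)
  ultimately have "- (k * g1 v) = k * g1 u" and "- g2 v = g2 u"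
    unfolding kv by simp_all
  then have "k * (g1 v + g1 u) = 0" by (simp only: distrib_left)
  with \<open>0 < k\<close> have "g1 v + g1 u = 0" by simp
  with w1 \<open>- g2 v = g2 u\<close> show "g1 v = - g1 u" and "g2 v = - g2 u"
    and "g3 v - k^2 * g1 v = g3 u - k^2 * g1 u" by auto
qed

lemma rotation_flips_first_if_fixes_second:
  fixes a b l :: real
  assumes "0 < l" "l < 2 * pi" "a * sin l + b * cos l = b"
  shows "a * cos l - b * sin l = - a"
proof -
  define h where "h = l / 2"
  have l: "l = 2 * h" by (simp add: h_def)
  have "sin h > 0" using assms(1,2) by (simp add: h_def sin_gt_zero)
  have pythagoras: "(sin h)^2 + (cos h)^2 = 1" by simp
  have "2 * (sin h * (a * cos h - b * sin h)) =
      a * sin l + b * cos l - b * ((sin h)^2 + (cos h)^2)"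
    unfolding l sin_double cos_double
    by (simp add: algebra_simps power2_eq_square del: sin_cos_squared_add sin_cos_squared_add3)
  also have "\<dots> = a * sin l + b * cos l - b" by (simp only: pythagoras mult_1_right)
  also have "\<dots> = 0" using assms(3) by simp
  finally have half_angle: "a * cos h = b * sin h" using \<open>sin h > 0\<close> by simp
  have "a * cos l - b * sin l = a * ((cos h)^2 - (sin h)^2) - 2 * cos h * (b * sin h)"
    unfolding l sin_double cos_double by (simp add: algebra_simps)
  also have "\<dots> = - a * ((sin h)^2 + (cos h)^2)"
    unfolding half_angle[symmetric]
    by (simp add: algebra_simps power2_eq_square del: sin_cos_squared_add sin_cos_squared_add3)
  finally show ?thesis using pythagoras by simp
qed

definition bang_arc :: "real^'n^'n \<Rightarrow> real \<Rightarrow> real \<Rightarrow> (real \<Rightarrow> real^'n) \<Rightarrow> (real \<Rightarrow> real^'n) \<Rightarrow> bool" where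
  "bang_arc M u v \<psi> p \<longleftrightarrow> u \<le> v \<and> continuous_on {u..v} \<psi> \<and> continuous_on {u..v} p \<and>
     (\<exists>K. finite K \<and> (\<forall>t\<in>{u..v} - K.
        (\<psi> has_vector_derivative (M *v \<psi> t)) (at t within {u..v}) \<and>
        (p has_vector_derivative (- (transpose M *v p t))) (at t within {u..v})))"

lemma bang_arc_pairing_continuous:
  assumes "bang_arc M u v \<psi> p"
  shows "continuous_on {u..v} (\<lambda>t. p t \<bullet> (F *v \<psi> t))"
  using assms unfolding bang_arc_def
  by (auto intro!: continuous_intros bounded_linear.continuous_on[OF matrix_vector_mul_bounded_linear])

lemma bang_arc_pairing_derivative:
  fixes \<psi> p :: "real \<Rightarrow> real^3"
  assumes "bang_arc M u v \<psi> p"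
  obtains K where "finite K" and "\<And>F t. t \<in> {u..v} - K \<Longrightarrow>
    ((\<lambda>t. p t \<bullet> (F *v \<psi> t)) has_real_derivative p t \<bullet> (lie F M *v \<psi> t)) (at t within {u..v})"
proof -
  obtain K where "finite K" and K: "\<And>t. t \<in> {u..v} - K \<Longrightarrow>
      (\<psi> has_vector_derivative (M *v \<psi> t)) (at t within {u..v}) \<and>
      (p has_vector_derivative (- (transpose M *v p t))) (at t within {u..v})"
    using assms unfolding bang_arc_def by blast
  show thesis
  proof (rule that[OF \<open>finite K\<close>])
    fix F t
    assume "t \<in> {u..v} - K"
    from K[OF this] have "(\<psi> has_vector_derivative (M *v \<psi> t)) (at t within {u..v})"
      and "(p has_vector_derivative (- (transpose M *v p t))) (at t within {u..v})" by simp_all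
    from costate_pairing_has_derivative[OF this, of F] show
      "((\<lambda>t. p t \<bullet> (F *v \<psi> t)) has_real_derivative p t \<bullet> (lie F M *v \<psi> t)) (at t within {u..v})"
      unfolding lie_def .
  qed
qed

lemma bang_arc_of_derivatives:
  assumes "u \<le> v" and "\<forall>t\<in>{u..v}.
      (\<psi> has_vector_derivative (M *v \<psi> t)) (at t within {u..v}) \<and>
      (p has_vector_derivative (- (transpose M *v p t))) (at t within {u..v})"
  shows "bang_arc M u v \<psi> p"
proof -
  have "continuous_on {u..v} \<psi>" "continuous_on {u..v} p"
    using assms(2) by (auto simp: continuous_on_eq_continuous_within
        intro: has_vector_derivative_continuous)
  then show ?thesis
    using assms unfolding bang_arc_def by (auto intro!: exI[of _ "{}"])
qed

lemma normal_extremal_bang_arc: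
  assumes "normal_extremal \<gamma> T A \<psi> p" and "0 \<le> u" "u \<le> v" "v \<le> T"
    and "\<forall>t\<in>{u<..<v}. A t = M"
  shows "bang_arc M u v \<psi> p"
proof -
  have sub: "{u..v} \<subseteq> {0..T}" using assms(2,4) by auto
  obtain S1 where "finite S1" and d\<psi>: "\<forall>t\<in>{0..T} - S1.
      (\<psi> has_vector_derivative (A t *v \<psi> t)) (at t within {0..T})"
    using assms(1) unfolding normal_extremal_def trajectory_def by blast
  obtain S2 where "finite S2" and dp: "\<forall>t\<in>{0..T} - S2.
      (p has_vector_derivative (- (transpose (A t) *v p t))) (at t within {0..T})"
    using assms(1) unfolding normal_extremal_def by blast
  have "(\<psi> has_vector_derivative (M *v \<psi> t)) (at t within {u..v}) \<and>
      (p has_vector_derivative (- (transpose M *v p t))) (at t within {u..v})"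
    if t: "t \<in> {u..v} - (S1 \<union> S2 \<union> {u, v})" for t
  proof -
    have "u < t" "t < v" using t by auto
    then have interior: "at t within {0..T} = at t" and "A t = M"
      using assms(2,4,5) by (auto intro!: at_within_Icc_at)
    have "t \<in> {0..T} - S1" "t \<in> {0..T} - S2" using t sub by auto
    with d\<psi> dp have "(\<psi> has_vector_derivative (A t *v \<psi> t)) (at t within {0..T})"
      and "(p has_vector_derivative (- (transpose (A t) *v p t))) (at t within {0..T})"
      by blast+
    then show ?thesis
      unfolding interior \<open>A t = M\<close> by (auto intro: has_vector_derivative_at_within)
  qed
  moreover have "finite (S1 \<union> S2 \<union> {u, v})" using \<open>finite S1\<close> \<open>finite S2\<close> by simp
  moreover have "continuous_on {u..v} \<psi>" "continuous_on {u..v} p"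
    using assms(1) sub unfolding normal_extremal_def trajectory_def
    by (auto intro: continuous_on_subset)
  ultimately show ?thesis
    unfolding bang_arc_def using \<open>u \<le> v\<close> by (intro conjI exI[of _ "S1 \<union> S2 \<union> {u, v}"]) auto
qed

lemma lie_F1_Ym: "lie (F1 \<gamma>) Ym = F2 \<gamma>"
  by (simp add: F1_def F2_def lie_def Xm_def Ym_def vec_eq_iff forall_3 matrix_matrix_mult_def sum_3 algebra_simps)

lemma lie_F2_Ym: "lie (F2 \<gamma>) Ym = - F3 \<gamma>"
  by (simp add: F3_def F2_def lie_def Xm_def Ym_def vec_eq_iff forall_3 matrix_matrix_mult_def sum_3 algebra_simps)

lemma lie_F3_Ym: "lie (F3 \<gamma>) Ym = F2 \<gamma>"
  by (simp add: F3_def F2_def lie_def Xm_def Ym_def vec_eq_iff forall_3 matrix_matrix_mult_def sum_3 algebra_simps)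

lemma F2_eq: "F2 \<gamma> = vector [vector [0, 0, 0], vector [0, 0, sin \<gamma> * cos \<gamma>], vector [0, - (sin \<gamma> * cos \<gamma>), 0]]"
  by (simp add: F2_def lie_def Xm_def Ym_def vec_eq_iff forall_3 matrix_matrix_mult_def sum_3)

lemma F3_eq: "F3 \<gamma> = vector [vector [0, 0, sin \<gamma> * cos \<gamma>], vector [0, 0, 0], vector [- (sin \<gamma> * cos \<gamma>), 0, 0]]"
  unfolding F3_def F2_def[symmetric] F2_eq
  by (simp add: lie_def Ym_def vec_eq_iff forall_3 matrix_matrix_mult_def sum_3)

lemma lie_F1_Xm: "lie (F1 \<gamma>) (Xm \<gamma>) = F2 \<gamma>"
  by (simp add: F1_def F2_def lie_def Xm_def Ym_def vec_eq_iff forall_3 matrix_matrix_mult_def sum_3 algebra_simps)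

lemma lie_F2_Xm: "lie (F2 \<gamma>) (Xm \<gamma>) = - ((sin \<gamma>)^2 *\<^sub>R F1 \<gamma>)"
  by (simp add: lie_def F2_eq F1_def Xm_def Ym_def vec_eq_iff forall_3 matrix_matrix_mult_def sum_3)
    (use sin_cos_squared_add[of \<gamma>] in algebra)

lemma lie_F3_Xm: "lie (F3 \<gamma>) (Xm \<gamma>) = (sin \<gamma>)^2 *\<^sub>R F2 \<gamma>"
  by (simp add: lie_def F2_eq F3_eq Xm_def vec_eq_iff forall_3 matrix_matrix_mult_def sum_3
      power2_eq_square algebra_simps)

lemma phi_after_Y_arc:
  fixes \<psi> p :: "real \<Rightarrow> real^3"
  assumes arc: "bang_arc Ym u v \<psi> p" and "u < v" "v - u < 2 * pi"
    and start: "phi \<gamma> \<psi> p u = (0, a, b)" and switch: "fst (phi \<gamma> \<psi> p v) = 0"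
  shows "phi \<gamma> \<psi> p v = (0, - a, b)"
proof -
  define g where "g F = (\<lambda>t. p t \<bullet> (F *v \<psi> t))" for F
  have phi_g: "phi \<gamma> \<psi> p t = (g (F1 \<gamma>) t, g (F2 \<gamma>) t, g (F3 \<gamma>) t)" for t
    by (simp add: phi_def g_def)
  obtain K where "finite K" and dg: "\<And>F t. t \<in> {u..v} - K \<Longrightarrow>
      (g F has_real_derivative p t \<bullet> (lie F Ym *v \<psi> t)) (at t within {u..v})"
    using bang_arc_pairing_derivative[OF arc] unfolding g_def by blast
  have cont: "continuous_on {u..v} (g F)" for F
    unfolding g_def by (rule bang_arc_pairing_continuous[OF arc])
  have deriv: "(g (F1 \<gamma>) has_real_derivative g (F2 \<gamma>) t) (at t within {u..v}) \<and>
      (g (F2 \<gamma>) has_real_derivative - g (F3 \<gamma>) t) (at t within {u..v}) \<and>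
      (g (F3 \<gamma>) has_real_derivative g (F2 \<gamma>) t) (at t within {u..v})"
    if "t \<in> {u..v} - K" for t
    using dg[OF that, of "F1 \<gamma>"] dg[OF that, of "F2 \<gamma>"] dg[OF that, of "F3 \<gamma>"]
    by (simp add: g_def lie_F1_Ym lie_F2_Ym lie_F3_Ym matrix_vector_mult_uminus_left)
  note rot = rotation_system_solution[OF less_imp_le[OF \<open>u < v\<close>] \<open>finite K\<close> cont cont cont deriv]
  have start_g: "g (F1 \<gamma>) u = 0" "g (F2 \<gamma>) u = a" "g (F3 \<gamma>) u = b"
    and switch_g: "g (F1 \<gamma>) v = 0"
    using start switch phi_g[of u] phi_g[of v] by simp_all
  then have "g (F3 \<gamma>) v = b" and fixed: "a * sin (v - u) + b * cos (v - u) = b"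
    using rot(1,3) by simp_all
  moreover have "g (F2 \<gamma>) v = - a"
    using rot(2) start_g rotation_flips_first_if_fixes_second[OF _ \<open>v - u < 2 * pi\<close> fixed] \<open>u < v\<close>
    by simp
  ultimately show ?thesis using phi_g[of v] switch_g by simp
qed

lemma phi_after_X_arc:
  fixes \<psi> p :: "real \<Rightarrow> real^3"
  assumes "0 < sin \<gamma>" and arc: "bang_arc (Xm \<gamma>) u (u + pi / sin \<gamma>) \<psi> p"
    and start: "phi \<gamma> \<psi> p u = (x, y, z)"
  shows "phi \<gamma> \<psi> p (u + pi / sin \<gamma>) = (- x, - y, z - 2 * (sin \<gamma>)^2 * x)"
proof -
  define v where "v = u + pi / sin \<gamma>"
  define g where "g F = (\<lambda>t. p t \<bullet> (F *v \<psi> t))" for F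
  have phi_g: "phi \<gamma> \<psi> p t = (g (F1 \<gamma>) t, g (F2 \<gamma>) t, g (F3 \<gamma>) t)" for t
    by (simp add: phi_def g_def)
  obtain K where "finite K" and dg: "\<And>F t. t \<in> {u..v} - K \<Longrightarrow>
      (g F has_real_derivative p t \<bullet> (lie F (Xm \<gamma>) *v \<psi> t)) (at t within {u..v})"
    using bang_arc_pairing_derivative[OF arc] unfolding g_def v_def by blast
  have cont: "continuous_on {u..v} (g F)" for F
    unfolding g_def v_def by (rule bang_arc_pairing_continuous[OF arc])
  have deriv: "(g (F1 \<gamma>) has_real_derivative g (F2 \<gamma>) t) (at t within {u..v}) \<and>
      (g (F2 \<gamma>) has_real_derivative - ((sin \<gamma>)^2 * g (F1 \<gamma>) t)) (at t within {u..v}) \<and>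
      (g (F3 \<gamma>) has_real_derivative (sin \<gamma>)^2 * g (F2 \<gamma>) t) (at t within {u..v})"
    if "t \<in> {u..v} - K" for t
    using dg[OF that, of "F1 \<gamma>"] dg[OF that, of "F2 \<gamma>"] dg[OF that, of "F3 \<gamma>"]
    by (simp add: g_def lie_F1_Xm lie_F2_Xm lie_F3_Xm matrix_vector_mult_uminus_left
        scaleR_matrix_vector_assoc[symmetric])
  have start_g: "g (F1 \<gamma>) u = x" "g (F2 \<gamma>) u = y" "g (F3 \<gamma>) u = z"
    using start phi_g[of u] by simp_all
  note half_period = harmonic_half_period[OF \<open>0 < sin \<gamma>\<close> v_def \<open>finite K\<close> cont cont cont deriv]
  show ?thesis
    using start_g half_period unfolding v_def[symmetric] phi_g by (simp add: algebra_simps)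
qed

lemma Xm_neq_Ym:
  assumes "0 < \<gamma>" "\<gamma> < pi / 2"
  shows "Xm \<gamma> \<noteq> Ym"
proof
  assume "Xm \<gamma> = Ym"
  then have "Xm \<gamma> $ 1 $ 3 = Ym $ 1 $ 3" by simp
  then have "sin \<gamma> * cos \<gamma> = 0" by (simp add: Xm_def Ym_def)
  moreover have "sin \<gamma> > 0" "cos \<gamma> > 0"
    using assms by (simp_all add: sin_gt_zero cos_gt_zero)
  ultimately show False by simp
qed

lemma switching_time_between_arcs:
  assumes "u < t" "t < w" "0 < t" "t < T"
    and "\<forall>s\<in>{u<..<t}. A s = M1" "\<forall>s\<in>{t<..<w}. A s = M2" "M1 \<noteq> M2"
  shows "switching_time T A t"
  unfolding switching_time_def
proof (intro conjI allI impI)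
  fix e :: real
  assume "e > 0"
  define s1 where "s1 = max (t - e / 2) ((u + t) / 2)"
  define s2 where "s2 = min (t + e / 2) ((t + w) / 2)"
  have "s1 \<in> {u<..<t}" "s2 \<in> {t<..<w}"
    unfolding s1_def s2_def using assms(1,2) \<open>e > 0\<close> by (auto simp: less_max_iff_disj min_less_iff_disj)
  then have "A s1 \<noteq> A s2" using assms(5-7) by simp
  moreover have "t - e < s1" "t + e > s2"
    unfolding s1_def s2_def using \<open>e > 0\<close> by auto
  ultimately show "\<exists>s1 s2. t - e < s1 \<and> s1 < t \<and> t < s2 \<and> s2 < t + e \<and> A s1 \<noteq> A s2"
    using \<open>s1 \<in> {u<..<t}\<close> \<open>s2 \<in> {t<..<w}\<close> by auto
qed (use assms in auto)

lemma time_optimal_time_le: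
  assumes "0 < sin \<gamma>" and "time_optimal \<gamma> T A \<psi>"
  shows "T \<le> pi / (2 * sin \<gamma>)"
proof -
  \<comment> \<open>X rotates the plane spanned by psi0 and e1 with angular speed sin g; a quarter turn
    carries psi0 to e1, which lies in the target set.\<close>
  define e1 :: "real^3" where "e1 = vector [1, 0, 0]"
  define \<psi>X where "\<psi>X t = cos (sin \<gamma> * t) *\<^sub>R psi0 \<gamma> + sin (sin \<gamma> * t) *\<^sub>R e1" for t
  define T' where "T' = pi / (2 * sin \<gamma>)"
  have X_psi0: "Xm \<gamma> *v psi0 \<gamma> = sin \<gamma> *\<^sub>R e1"
    by (simp add: vec_eq_iff forall_3 matrix_vector_mult_def sum_3 Xm_def psi0_def e1_def)
      (use sin_cos_squared_add[of \<gamma>] in algebra)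
  have X_e1: "Xm \<gamma> *v e1 = - sin \<gamma> *\<^sub>R psi0 \<gamma>"
    by (simp add: vec_eq_iff forall_3 matrix_vector_mult_def sum_3 Xm_def psi0_def e1_def power2_eq_square)
  have "(\<psi>X has_vector_derivative Xm \<gamma> *v \<psi>X t) (at t within {0..T'})" for t
  proof -
    have "(\<psi>X has_vector_derivative
        (- sin (sin \<gamma> * t) * sin \<gamma>) *\<^sub>R psi0 \<gamma> + (cos (sin \<gamma> * t) * sin \<gamma>) *\<^sub>R e1) (at t within {0..T'})"
      unfolding \<psi>X_def by (auto intro!: derivative_eq_intros)
    moreover have "Xm \<gamma> *v \<psi>X t =
        (- sin (sin \<gamma> * t) * sin \<gamma>) *\<^sub>R psi0 \<gamma> + (cos (sin \<gamma> * t) * sin \<gamma>) *\<^sub>R e1"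
      by (simp add: \<psi>X_def matrix_vector_right_distrib matrix_vector_mult_scaleR X_psi0 X_e1)
    ultimately show ?thesis by simp
  qed
  moreover have "admissible_control \<gamma> T' (\<lambda>_. Xm \<gamma>)"
    unfolding admissible_control_def T'_def using assms(1) by auto
  moreover have "\<psi>X 0 = psi0 \<gamma>" "continuous_on {0..T'} \<psi>X"
    unfolding \<psi>X_def by (auto intro!: continuous_intros)
  ultimately have "trajectory \<gamma> T' (\<lambda>_. Xm \<gamma>) \<psi>X"
    unfolding trajectory_def by blast
  moreover have "\<psi>X T' \<in> SigmaT"
    using assms(1) by (simp add: \<psi>X_def T'_def SigmaT_def e3_def psi0_def e1_def inner_vec_def sum_3)
  ultimately show ?thesis
    using assms(2) unfolding time_optimal_def T'_def by blast
qed

lemma regular_extremal_YXY_block_phi: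
  assumes "0 < \<gamma>" "\<gamma> < pi / 2" and extremal: "regular_normal_extremal \<gamma> T A \<psi> p"
    and "0 < l1" "l1 < 2 * pi" "0 < l2" "l2 < 2 * pi"
    and block: "YXY_block \<gamma> T A t0 l1 (pi / sin \<gamma>) l2"
    and start: "phi \<gamma> \<psi> p t0 = (0, a, b)"
  shows "phi \<gamma> \<psi> p (t0 + l1 + pi / sin \<gamma> + l2) = (0, - a, b)"
proof -
  have "0 < sin \<gamma>" using assms(1,2) by (simp add: sin_gt_zero)
  define t1 t2 t3 where "t1 = t0 + l1" and "t2 = t1 + pi / sin \<gamma>" and "t3 = t2 + l2"
  from block have Y1: "\<forall>t\<in>{t0<..<t1}. A t = Ym" and X: "\<forall>t\<in>{t1<..<t2}. A t = Xm \<gamma>"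
    and Y2: "\<forall>t\<in>{t2<..<t3}. A t = Ym"
    and switch0: "switching_time T A t0" and switch3: "switching_time T A t3"
    unfolding YXY_block_def t1_def t2_def t3_def by simp_all
  have order: "0 < t0" "t0 < t1" "t1 < t2" "t2 < t3" "t3 < T"
    using switch0 switch3 \<open>0 < l1\<close> \<open>0 < l2\<close> \<open>0 < sin \<gamma>\<close>
    by (simp_all add: switching_time_def t1_def t2_def t3_def)
  have switch1: "switching_time T A t1"
    using switching_time_between_arcs[OF order(2,3) _ _ Y1 X Xm_neq_Ym[OF assms(1,2), symmetric]] order
    by simp
  have NE: "normal_extremal \<gamma> T A \<psi> p"
    and phi1_zero: "\<And>t. switching_time T A t \<Longrightarrow> fst (phi \<gamma> \<psi> p t) = 0"
    using extremal unfolding regular_normal_extremal_def by simp_all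
  note arc = normal_extremal_bang_arc[OF NE]
  have "phi \<gamma> \<psi> p t1 = (0, - a, b)"
    by (rule phi_after_Y_arc[OF arc[OF _ _ _ Y1] order(2) _ start phi1_zero[OF switch1]])
      (use order \<open>l1 < 2 * pi\<close> in \<open>simp_all add: t1_def\<close>)
  moreover have "bang_arc (Xm \<gamma>) t1 (t1 + pi / sin \<gamma>) \<psi> p"
    unfolding t2_def[symmetric] by (rule arc[OF _ _ _ X])
      (use order in simp_all)
  ultimately have "phi \<gamma> \<psi> p t2 = (0, a, b)"
    using phi_after_X_arc[OF \<open>0 < sin \<gamma>\<close>] by (simp add: t2_def)
  have "phi \<gamma> \<psi> p t3 = (0, - a, b)"
    by (rule phi_after_Y_arc[OF arc[OF _ _ _ Y2] order(4) _ \<open>phi \<gamma> \<psi> p t2 = (0, a, b)\<close> phi1_zero[OF switch3]])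
      (use order \<open>l2 < 2 * pi\<close> in \<open>simp_all add: t3_def\<close>)
  then show ?thesis by (simp add: t1_def t2_def t3_def)
qed

theorem mainTheorem11:
  fixes \<gamma> T t0 l1 l2 a b :: real
    and A :: "real \<Rightarrow> real^3^3" and \<psi> p :: "real \<Rightarrow> real^3"
  assumes "0 < \<gamma>" and "\<gamma> < pi / 2"
    and "regular_normal_extremal \<gamma> T A \<psi> p"
    and "0 < l1" and "l1 < 2 * pi" and "0 < l2" and "l2 < 2 * pi"
    and "YXY_block \<gamma> T A t0 l1 (pi / sin \<gamma>) l2"
    and "phi \<gamma> \<psi> p t0 = (0, a, b)" and "a \<noteq> 0"
  shows "phi \<gamma> \<psi> p (t0 + l1 + pi / sin \<gamma> + l2) = (0, -a, b)
    \<and> (\<forall>\<psi>' p' :: real \<Rightarrow> real^3.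
         (\<forall>t\<in>{0..pi / sin \<gamma>}.
            (\<psi>' has_vector_derivative (Xm \<gamma> *v \<psi>' t)) (at t within {0..pi / sin \<gamma>}) \<and>
            (p' has_vector_derivative (- (transpose (Xm \<gamma>) *v p' t))) (at t within {0..pi / sin \<gamma>}))
         \<and> phi \<gamma> \<psi>' p' 0 = (0, a, b)
         \<longrightarrow> phi \<gamma> \<psi>' p' (pi / sin \<gamma>) = (0, -a, b))
    \<and> l1 + pi / sin \<gamma> + l2 > pi / sin \<gamma>
    \<and> \<not> time_optimal \<gamma> T A \<psi>"
proof (intro conjI allI impI)
  have "0 < sin \<gamma>" using assms(1,2) by (simp add: sin_gt_zero)
  show "phi \<gamma> \<psi> p (t0 + l1 + pi / sin \<gamma> + l2) = (0, -a, b)"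
    by (rule regular_extremal_YXY_block_phi[OF assms(1-9)])
  show "phi \<gamma> \<psi>' p' (pi / sin \<gamma>) = (0, -a, b)"
    if "(\<forall>t\<in>{0..pi / sin \<gamma>}.
          (\<psi>' has_vector_derivative (Xm \<gamma> *v \<psi>' t)) (at t within {0..pi / sin \<gamma>}) \<and>
          (p' has_vector_derivative (- (transpose (Xm \<gamma>) *v p' t))) (at t within {0..pi / sin \<gamma>}))
        \<and> phi \<gamma> \<psi>' p' 0 = (0, a, b)" for \<psi>' p' :: "real \<Rightarrow> real^3"
    using phi_after_X_arc[OF \<open>0 < sin \<gamma>\<close> bang_arc_of_derivatives, of 0] that \<open>0 < sin \<gamma>\<close> by simp
  show "l1 + pi / sin \<gamma> + l2 > pi / sin \<gamma>" using assms(4,6) by simp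
  show "\<not> time_optimal \<gamma> T A \<psi>"
  proof
    assume "time_optimal \<gamma> T A \<psi>"
    then have "T \<le> pi / (2 * sin \<gamma>)" using time_optimal_time_le \<open>0 < sin \<gamma>\<close> by blast
    moreover have "pi / (2 * sin \<gamma>) < pi / sin \<gamma>"
      using \<open>0 < sin \<gamma>\<close> by (simp add: field_simps)
    moreover have "t0 + l1 + pi / sin \<gamma> + l2 < T" and "0 < t0"
      using assms(8) unfolding YXY_block_def switching_time_def by simp_all
    ultimately show False using assms(4,6) by linarith
  qed
qed

end
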